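(* Let $k\ge1$. In base $2$, among all odd $k$-digit numbers $n$ (i.e. odd $n$ with $2^{k-1}\le n<2^k$), $d_2(n)$ has a unique maximum at $n=2^k-1$ (binary $11\ldots1$).
   Context: Base-$2$ lunar product: for $x=\sum_ix_i2^i$, $y=\sum_jy_j2^j$ with binary digits $x_i,y_j\in\{0,1\}$, $x\otimes y=\sum_n(\max_{i+j=n}\min(x_i,y_j))2^n$. For a positive integer $n$, $d_2(n)$ is the number of positive integers $m$ such that $m\otimes q=n$ for some integer $q$. *)

theory Defs
  imports Main
begin

definition bdigit :: "nat \<Rightarrow> nat \<Rightarrow> nat" where
  "bdigit x i = x div 2 ^ i mod 2"

(* base-2 lunar product: digit n of x \<otimes> y is max over i+j=n of min(x_i, y_j).
   Digits vanish for indices > x (resp. > y), so n ranges over n \<le> x + y. *)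
definition lunar_mult :: "nat \<Rightarrow> nat \<Rightarrow> nat" where
  "lunar_mult x y =
     (\<Sum>n\<le>x + y. Max ((\<lambda>i. min (bdigit x i) (bdigit y (n - i))) ` {0..n}) * 2 ^ n)"

definition d2 :: "nat \<Rightarrow> nat" where
  "d2 n = card {m::nat. 0 < m \<and> (\<exists>q. lunar_mult m q = n)}"

end

theory Submission
  imports Defs
begin

text \<open>
  On binary digit sets the base-2 lunar product is the sumset: digit \<open>t\<close> of \<open>m \<otimes> q\<close> is set
  iff \<open>t = i + j\<close> with digit \<open>i\<close> of \<open>m\<close> and digit \<open>j\<close> of \<open>q\<close> set. So if \<open>m \<otimes> q = n\<close> with
  \<open>n\<close> odd, then \<open>0\<close> is a digit of \<open>q\<close> and the digits of \<open>m\<close> are digits of \<open>n\<close>. Let \<open>a\<close> be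
  the top digit of \<open>m\<close> and add to \<open>m\<close> every position \<open>t \<le> a\<close> at which \<open>n\<close> has digit \<open>0\<close>.
  The result times the repunit with digits \<open>{0..k-1-a}\<close> is the repunit \<open>2^k - 1\<close>, and
  intersecting it with the digits of \<open>n\<close> gives back \<open>m\<close>. This injects the lunar divisors of
  \<open>n\<close> into those of \<open>2^k - 1\<close>, and it misses the repunit with digits \<open>{0..g}\<close> whenever
  \<open>g < k\<close> is a zero digit of \<open>n\<close>, since its top digit \<open>g\<close> would have to be a digit of \<open>n\<close>.
\<close>

unbundle bit_operations_syntax

lemma bdigit_eq_of_bool: "bdigit x i = of_bool (bit x i)"
  unfolding bdigit_def bit_iff_odd by (simp add: odd_iff_mod_2_eq_one)

lemma bit_exp_minus_1_iff: "bit ((2::nat) ^ k - 1) t \<longleftrightarrow> t < k"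
  using bit_mask_iff[of k t, where 'a=nat] by (simp add: mask_eq_exp_minus_1)

lemma bit_imp_less_of_less_exp:
  fixes m :: nat
  assumes "m < 2 ^ k" and "bit m i"
  shows "i < k"
  using assms by (metis bit_take_bit_iff take_bit_nat_eq_self_iff)

lemma less_exp_of_bits_less:
  fixes m :: nat
  assumes "\<And>i. bit m i \<Longrightarrow> i < k"
  shows "m < 2 ^ k"
proof -
  have "take_bit k m = m"
    by (rule bit_eqI) (auto simp: bit_take_bit_iff assms)
  then show ?thesis
    by (metis take_bit_nat_less_exp)
qed

lemma bit_imp_less: "bit (m::nat) i \<Longrightarrow> i < m"
  using bit_imp_less_of_less_exp[of m m] by simp

lemma bit_digit_sum_iff:
  fixes c :: "nat \<Rightarrow> nat"
  assumes "\<And>n. c n \<le> 1"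
  shows "bit (\<Sum>n<N. c n * 2 ^ n) t \<longleftrightarrow> t < N \<and> c t = 1"
proof (induction N arbitrary: t)
  case 0
  then show ?case by simp
next
  case (Suc N)
  have digit: "bit (c N * 2 ^ N) t \<longleftrightarrow> t = N \<and> c N = 1" for t
    using assms[of N] by (cases "c N") (auto simp: bit_exp_iff)
  have "bit (\<Sum>n<N. c n * 2 ^ n) t \<Longrightarrow> \<not> bit (c N * 2 ^ N) t" for t
    using Suc.IH digit by auto
  then have "bit (\<Sum>n<Suc N. c n * 2 ^ n) t \<longleftrightarrow>
      bit (\<Sum>n<N. c n * 2 ^ n) t \<or> bit (c N * 2 ^ N) t"
    by (simp add: bit_disjunctive_add_iff)
  then show ?case
    using Suc.IH digit by (auto simp: less_Suc_eq)
qed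

definition top_bit :: "nat \<Rightarrow> nat" where
  "top_bit m = Max {i. bit m i}"

lemma finite_bits: "finite {i. bit (m::nat) i}"
  by (rule finite_subset[of _ "{..<m}"]) (auto simp: bit_imp_less)

lemma bit_le_top_bit: "bit m i \<Longrightarrow> i \<le> top_bit m"
  unfolding top_bit_def using finite_bits by simp

lemma bit_top_bit:
  assumes "m \<noteq> 0"
  shows "bit m (top_bit m)"
proof -
  have "{i. bit m i} \<noteq> {}"
    using assms bit_eqI[of m 0] by auto
  then show ?thesis
    unfolding top_bit_def using Max_in[OF finite_bits] by auto
qed

lemma Max_min_bdigit:
  "Max ((\<lambda>i. min (bdigit x i) (bdigit y (n - i))) ` {0..n}) =
     of_bool (\<exists>i\<le>n. bit x i \<and> bit y (n - i))"
proof (cases "\<exists>i\<le>n. bit x i \<and> bit y (n - i)")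
  case True
  then obtain i where "i \<le> n" "bit x i" "bit y (n - i)"
    by blast
  then show ?thesis
    by (intro Max_eqI) (auto simp: bdigit_eq_of_bool intro!: image_eqI[of _ _ i])
next
  case False
  then have "(\<lambda>i. min (bdigit x i) (bdigit y (n - i))) ` {0..n} = {0}"
    by (auto simp: bdigit_eq_of_bool intro!: image_eqI[of _ _ 0])
  then show ?thesis
    using False by simp
qed

lemma bit_lunar_mult_iff:
  "bit (lunar_mult x y) t \<longleftrightarrow> (\<exists>i j. bit x i \<and> bit y j \<and> t = i + j)"
proof -
  have "bit (lunar_mult x y) t \<longleftrightarrow> t < Suc (x + y) \<and> (\<exists>i\<le>t. bit x i \<and> bit y (t - i))"
    unfolding lunar_mult_def Max_min_bdigit lessThan_Suc_atMost [symmetric]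
    by (subst bit_digit_sum_iff) auto
  also have "\<dots> \<longleftrightarrow> (\<exists>i j. bit x i \<and> bit y j \<and> t = i + j)"
  proof
    assume "t < Suc (x + y) \<and> (\<exists>i\<le>t. bit x i \<and> bit y (t - i))"
    then show "\<exists>i j. bit x i \<and> bit y j \<and> t = i + j"
      by (metis le_add_diff_inverse)
  next
    assume "\<exists>i j. bit x i \<and> bit y j \<and> t = i + j"
    then obtain i j where "bit x i" "bit y j" "t = i + j"
      by blast
    moreover have "i < x" "j < y"
      using bit_imp_less \<open>bit x i\<close> \<open>bit y j\<close> by auto
    ultimately show "t < Suc (x + y) \<and> (\<exists>i\<le>t. bit x i \<and> bit y (t - i))"
      by (auto intro!: exI[of _ i])
  qed
  finally show ?thesis .
qed

definition lunar_divisors :: "nat \<Rightarrow> nat set" where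
  "lunar_divisors n = {m. 0 < m \<and> (\<exists>q. lunar_mult m q = n)}"

lemma d2_eq_card_lunar_divisors: "d2 n = card (lunar_divisors n)"
  by (simp add: d2_def lunar_divisors_def)

lemma bit_lunar_divisor_of_odd:
  assumes "odd n" and "m \<in> lunar_divisors n" and "bit m i"
  shows "bit n i"
proof -
  obtain q where q: "lunar_mult m q = n"
    using assms(2) by (auto simp: lunar_divisors_def)
  then have "bit q 0"
    using assms(1) bit_lunar_mult_iff[of m q 0] by (auto simp: bit_0)
  then show ?thesis
    using q assms(3) bit_lunar_mult_iff[of m q i] by auto
qed

lemma finite_lunar_divisors_of_odd:
  assumes "odd n"
  shows "finite (lunar_divisors n)"
proof (rule finite_subset)
  show "lunar_divisors n \<subseteq> {..<2 ^ n}"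
    using bit_lunar_divisor_of_odd[OF assms] bit_imp_less less_exp_of_bits_less by blast
qed simp

lemma lunar_divisor_exp_minus_1I:
  assumes "a < k"
    and "\<And>i. bit x i \<Longrightarrow> i \<le> a"
    and "\<And>t. t < k \<Longrightarrow> \<exists>i j. bit x i \<and> j < k - a \<and> t = i + j"
  shows "x \<in> lunar_divisors (2 ^ k - 1)"
proof -
  have "lunar_mult x (2 ^ (k - a) - 1) = 2 ^ k - 1"
  proof (rule bit_eqI)
    fix t
    have "(\<exists>i j. bit x i \<and> j < k - a \<and> t = i + j) \<longleftrightarrow> t < k"
      using assms by fastforce
    then show "bit (lunar_mult x (2 ^ (k - a) - 1)) t \<longleftrightarrow> bit ((2::nat) ^ k - 1) t"
      unfolding bit_lunar_mult_iff bit_exp_minus_1_iff by simp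
  qed
  moreover have "x \<noteq> 0"
    using assms(1) assms(3)[of 0] by (auto simp: bit_0 odd_pos)
  ultimately show ?thesis
    by (auto simp: lunar_divisors_def)
qed

lemma exp_minus_1_in_lunar_divisors:
  assumes "g < k"
  shows "2 ^ Suc g - 1 \<in> lunar_divisors (2 ^ k - 1)"
proof (rule lunar_divisor_exp_minus_1I[OF assms])
  fix t
  assume "t < k"
  then have "bit ((2::nat) ^ Suc g - 1) (min t g) \<and> t - min t g < k - g \<and> t = min t g + (t - min t g)"
    using assms unfolding bit_exp_minus_1_iff by auto
  then show "\<exists>i j. bit ((2::nat) ^ Suc g - 1) i \<and> j < k - g \<and> t = i + j"
    by blast
qed (simp only: bit_exp_minus_1_iff less_Suc_eq_le)

definition fill_gaps :: "nat \<Rightarrow> nat \<Rightarrow> nat" where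
  "fill_gaps n m = m OR (mask (Suc (top_bit m)) XOR take_bit (Suc (top_bit m)) n)"

lemma bit_fill_gaps_iff:
  "bit (fill_gaps n m) t \<longleftrightarrow> t \<le> top_bit m \<and> (bit m t \<or> \<not> bit n t)"
  using bit_le_top_bit[of m t] by (auto simp: fill_gaps_def bit_simps)

lemma fill_gaps_in_lunar_divisors:
  assumes "odd n" and "n < 2 ^ k" and m: "m \<in> lunar_divisors n"
  shows "fill_gaps n m \<in> lunar_divisors (2 ^ k - 1)"
proof -
  define a where "a = top_bit m"
  obtain q where q: "lunar_mult m q = n"
    using m by (auto simp: lunar_divisors_def)
  have bit_n: "bit n t \<longleftrightarrow> (\<exists>i j. bit m i \<and> bit q j \<and> t = i + j)" for t
    using q bit_lunar_mult_iff by metis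
  have "bit m a"
    using m bit_top_bit by (auto simp: a_def lunar_divisors_def)
  then have q_small: "a + j < k" if "bit q j" for j
    using that bit_n[of "a + j"] bit_imp_less_of_less_exp[OF assms(2)] by blast
  have bit_fill: "bit (fill_gaps n m) t \<longleftrightarrow> t \<le> a \<and> (bit m t \<or> \<not> bit n t)" for t
    unfolding a_def by (rule bit_fill_gaps_iff)
  have "a < k"
    using \<open>bit m a\<close> bit_lunar_divisor_of_odd[OF assms(1) m] bit_imp_less_of_less_exp[OF assms(2)]
    by blast
  then show ?thesis
  proof (rule lunar_divisor_exp_minus_1I)
    show "\<And>i. bit (fill_gaps n m) i \<Longrightarrow> i \<le> a"
      using bit_fill by blast
    fix t
    assume "t < k"
    consider "a < t" | "t \<le> a" "bit n t" | "t \<le> a" "\<not> bit n t"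
      by linarith
    then show "\<exists>i j. bit (fill_gaps n m) i \<and> j < k - a \<and> t = i + j"
    proof cases
      case 1
      then have "bit (fill_gaps n m) a \<and> t - a < k - a \<and> t = a + (t - a)"
        using \<open>bit m a\<close> \<open>t < k\<close> bit_fill by auto
      then show ?thesis
        by blast
    next
      case 2
      then obtain i j where "bit m i" "bit q j" "t = i + j"
        using bit_n by blast
      then have "bit (fill_gaps n m) i \<and> j < k - a \<and> t = i + j"
        using q_small[of j] bit_fill bit_le_top_bit[of m i] a_def by auto
      then show ?thesis
        by blast
    next
      case 3
      then have "bit (fill_gaps n m) t \<and> 0 < k - a \<and> t = t + 0"
        using bit_fill \<open>a < k\<close> by auto
      then show ?thesis
        by blast
    qed
  qed
qed

lemma inj_on_fill_gaps:
  assumes "odd n"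
  shows "inj_on (fill_gaps n) (lunar_divisors n)"
proof (rule inj_onI)
  have recover: "bit m t \<longleftrightarrow> bit (fill_gaps n m) t \<and> bit n t" if "m \<in> lunar_divisors n" for m t
    using that bit_fill_gaps_iff bit_le_top_bit bit_lunar_divisor_of_odd[OF assms] by blast
  fix x y
  assume "x \<in> lunar_divisors n" "y \<in> lunar_divisors n" "fill_gaps n x = fill_gaps n y"
  then have "bit x t \<longleftrightarrow> bit y t" for t
    using recover by simp
  then show "x = y"
    by (rule bit_eqI)
qed

lemma exp_minus_1_notin_fill_gaps_image:
  assumes "odd n" and "\<not> bit n g"
  shows "2 ^ Suc g - 1 \<notin> fill_gaps n ` lunar_divisors n"
proof
  assume "2 ^ Suc g - 1 \<in> fill_gaps n ` lunar_divisors n"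
  then obtain m where m: "m \<in> lunar_divisors n" and eq: "fill_gaps n m = 2 ^ Suc g - 1"
    by (metis imageE)
  have bits: "t \<le> top_bit m \<and> (bit m t \<or> \<not> bit n t) \<longleftrightarrow> t \<le> g" for t
    using bit_fill_gaps_iff[of n m t]
    unfolding eq bit_exp_minus_1_iff by (auto simp: less_Suc_eq_le)
  have "bit m (top_bit m)"
    using m bit_top_bit by (auto simp: lunar_divisors_def)
  moreover have "top_bit m = g"
    using bits[of g] bits[of "top_bit m"] \<open>bit m (top_bit m)\<close> by auto
  ultimately show False
    using bit_lunar_divisor_of_odd[OF assms(1) m] assms(2) by auto
qed

lemma exists_zero_digit:
  fixes n :: nat
  assumes "n < 2 ^ k" and "n \<noteq> 2 ^ k - 1"
  obtains g where "g < k" and "\<not> bit n g"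
proof -
  have "\<exists>g<k. \<not> bit n g"
  proof (rule ccontr)
    assume "\<not> ?thesis"
    then have "bit n t \<longleftrightarrow> bit ((2::nat) ^ k - 1) t" for t
      using bit_imp_less_of_less_exp[OF assms(1)] unfolding bit_exp_minus_1_iff by auto
    then have "n = 2 ^ k - 1"
      by (rule bit_eqI)
    with assms(2) show False ..
  qed
  with that show ?thesis
    by blast
qed

theorem mainTheorem4:
  fixes k :: nat
  assumes "k \<ge> 1"
  shows "\<forall>n::nat. odd n \<and> 2 ^ (k - 1) \<le> n \<and> n < 2 ^ k \<and> n \<noteq> 2 ^ k - 1
           \<longrightarrow> d2 n < d2 (2 ^ k - 1)"
proof (intro allI impI)
  fix n :: nat
  assume "odd n \<and> 2 ^ (k - 1) \<le> n \<and> n < 2 ^ k \<and> n \<noteq> 2 ^ k - 1"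
  then have odd: "odd n" and less: "n < 2 ^ k" and "n \<noteq> 2 ^ k - 1"
    by auto
  then obtain g where "g < k" "\<not> bit n g"
    using exists_zero_digit by blast
  have "odd ((2::nat) ^ k - 1)"
    using assms by simp
  then have "finite (lunar_divisors (2 ^ k - 1))"
    by (rule finite_lunar_divisors_of_odd)
  moreover have "fill_gaps n ` lunar_divisors n \<subset> lunar_divisors (2 ^ k - 1)"
    using fill_gaps_in_lunar_divisors[OF odd less] exp_minus_1_in_lunar_divisors[OF \<open>g < k\<close>]
      exp_minus_1_notin_fill_gaps_image[OF odd \<open>\<not> bit n g\<close>] by blast
  ultimately have "card (fill_gaps n ` lunar_divisors n) < card (lunar_divisors (2 ^ k - 1))"
    by (rule psubset_card_mono)
  then show "d2 n < d2 (2 ^ k - 1)"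
    by (simp add: d2_eq_card_lunar_divisors card_image[OF inj_on_fill_gaps[OF odd]])
qed

end
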